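(* Let $(K,\mathrm{val})$ be a $2$-henselian valued field whose residue class field $F$ has characteristic $\neq2$, let $A$ be a subring with $B\subseteq A\subseteq K$, $H=\mathrm{val}(A^\times)$, and let $\mathcal M$ be a quasi-quadratic module in $A$. Let $x\in A\setminus\{0\}$ with $\mathrm{val}(x)=g$. Then $x\in\operatorname{supp}(\mathcal M)$ if and only if $M_g^A(\mathcal M)=F$. Moreover, if $M_g^A(\mathcal M)=F$ and $h\in G$ with $h\ge g$, then $M_h^A(\mathcal M)=F$. Furthermore, the following are equivalent: (a) $\mathcal M=A$; (b) $M_g^A(\mathcal M)=F$ for all $g\in H\cup G_{\ge e}$; (c) $M_e^A(\mathcal M)=F$.
   Context: Let $(G,\le)$ be a totally ordered abelian group written multiplicatively with identity $e$; $G_{\ge e}=\{g\in G:g\ge e\}$, $G^2=\{g^2:g\in G\}$. Let $(K,\mathrm{val})$ be a valued field with surjective valuation $\mathrm{val}:K\to G\cup\{\infty\}$, valuation ring $B=\{x:\mathrm{val}(x)\ge e\}$, residue map $\pi:B\to F$, residue field $F$. A strict unit is $x\in B^\times$ with $\pi(x)=1$; when $\mathrm{char}F\ne2$, $2$-henselian is equivalent to every strict unit being a square in $K$. For a subring $A$ with $B\subseteq A\subseteq K$ put $H=\mathrm{val}(A^\times)$. For $g\in G$, $\overline g$ is its class in $G/G^2$. A quasi-quadratic module in a commutative ring $R$ is a subset $M\subseteq R$ with $M+M\subseteq M$ and $a^2M\subseteq M$ for all $a\in R$; its support is $\operatorname{supp}(M)=M\cap(-M)$. A pseudo-angular component map is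 a map $\mathrm{p.an}:K^\times\to F^\times$ such that: (1) $\mathrm{p.an}(u)=\pi(u)$ for $u\in B^\times$; (2) $\mathrm{p.an}(ux)=\pi(u)\mathrm{p.an}(x)$ for $u\in B^\times,x\in K^\times$; (3) for all $g\in G$, $c\in F^\times$ there is $w\in K$ with $\mathrm{val}(w)=g$, $\mathrm{p.an}(w)=c$; (4) for nonzero $x_1,x_2$ with $x_1+x_2\ne0$: if $\mathrm{val}(x_1)<\mathrm{val}(x_2)$ then $\mathrm{p.an}(x_1+x_2)=\mathrm{p.an}(x_1)$; if $\mathrm{val}(x_1)=\mathrm{val}(x_2)$ and $\mathrm{p.an}(x_1)+\mathrm{p.an}(x_2)\ne0$ then $\mathrm{val}(x_1+x_2)=\mathrm{val}(x_1)$ and $\mathrm{p.an}(x_1+x_2)=\mathrm{p.an}(x_1)+\mathrm{p.an}(x_2)$; (5) if $x,y\in K^\times$, $\overline{\mathrm{val}(x)}=\overline{\mathrm{val}(y)}$ and $\mathrm{p.an}(x)=\mathrm{p.an}(y)$ then $y=u^2x$ for some $u\in K^\times$; (6) for $a,u\in K^\times$ there is $k\in F^\times$ with $\mathrm{p.an}(au^2)=\mathrm{p.an}(a)k^2$. Such a map exists under the hypotheses; fix one. For a quasi-quadratic module $\mathcal M$ in $A$ and $g\in G$: $M_g^A(\mathcal M)=\{\mathrm{p.an}(x):x\in\mathcal M\setminus\{0\},\ \mathrm{val}(x)=g\}\cup\{0\}$. *)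

theory Defs
  imports Main
begin

text \<open>The value group G is a type 'g of class linordered_ab_group_add,
  written additively: e is 0, g^2 is g + g, G_{>=e} is {g. 0 \<le> g}.
  The valuation val :: 'k \<Rightarrow> 'g is only meaningful on nonzero elements
  (val 0 = \<infinity> is modelled by always guarding with x \<noteq> 0).\<close>

definition valuation :: "('k::field \<Rightarrow> 'g::linordered_ab_group_add) \<Rightarrow> bool" where
  "valuation val \<longleftrightarrow>
     (\<forall>x y. x \<noteq> 0 \<longrightarrow> y \<noteq> 0 \<longrightarrow> val (x * y) = val x + val y) \<and>
     (\<forall>x y. x \<noteq> 0 \<longrightarrow> y \<noteq> 0 \<longrightarrow> x + y \<noteq> 0 \<longrightarrow> min (val x) (val y) \<le> val (x + y)) \<and>
     (\<forall>g. \<exists>x. x \<noteq> 0 \<and> val x = g)"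

definition val_ring :: "('k::field \<Rightarrow> 'g::linordered_ab_group_add) \<Rightarrow> 'k set" where
  "val_ring val = {x. x = 0 \<or> 0 \<le> val x}"

definition residue_map :: "('k::field \<Rightarrow> 'g::linordered_ab_group_add) \<Rightarrow> ('k \<Rightarrow> 'f::field) \<Rightarrow> bool" where
  "residue_map val res \<longleftrightarrow>
     (\<forall>x\<in>val_ring val. \<forall>y\<in>val_ring val. res (x + y) = res x + res y \<and> res (x * y) = res x * res y) \<and>
     res 1 = 1 \<and>
     (\<forall>x\<in>val_ring val. res x = 0 \<longleftrightarrow> (x = 0 \<or> 0 < val x)) \<and>
     (\<forall>c. \<exists>x\<in>val_ring val. res x = c)"

definition units_of_ring :: "'k::field set \<Rightarrow> 'k set" where
  "units_of_ring A = {x \<in> A. x \<noteq> 0 \<and> inverse x \<in> A}"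

definition strict_unit :: "('k::field \<Rightarrow> 'g::linordered_ab_group_add) \<Rightarrow> ('k \<Rightarrow> 'f::field) \<Rightarrow> 'k \<Rightarrow> bool" where
  "strict_unit val res x \<longleftrightarrow> x \<in> units_of_ring (val_ring val) \<and> res x = 1"

text \<open>2-henselian, in the form valid when char F \<noteq> 2: every strict unit is a square.\<close>
definition two_henselian :: "('k::field \<Rightarrow> 'g::linordered_ab_group_add) \<Rightarrow> ('k \<Rightarrow> 'f::field) \<Rightarrow> bool" where
  "two_henselian val res \<longleftrightarrow> (\<forall>x. strict_unit val res x \<longrightarrow> (\<exists>y. x = y ^ 2))"

definition subring :: "'k::field set \<Rightarrow> bool" where
  "subring A \<longleftrightarrow> 0 \<in> A \<and> 1 \<in> A \<and> (\<forall>x\<in>A. \<forall>y\<in>A. x + y \<in> A \<and> x * y \<in> A \<and> - x \<in> A)"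

definition quasi_quadratic_module :: "'k::comm_ring_1 set \<Rightarrow> 'k set \<Rightarrow> bool" where
  "quasi_quadratic_module A M \<longleftrightarrow> M \<subseteq> A \<and>
     (\<forall>x\<in>M. \<forall>y\<in>M. x + y \<in> M) \<and> (\<forall>a\<in>A. \<forall>x\<in>M. a ^ 2 * x \<in> M)"

definition supp :: "'k::comm_ring_1 set \<Rightarrow> 'k set" where
  "supp M = M \<inter> uminus ` M"

text \<open>Same class in G/G^2 (additively: the difference is of the form h + h).\<close>
definition same_sq_class :: "'g::linordered_ab_group_add \<Rightarrow> 'g \<Rightarrow> bool" where
  "same_sq_class g h \<longleftrightarrow> (\<exists>k. g - h = k + k)"

definition pseudo_angular :: "('k::field \<Rightarrow> 'g::linordered_ab_group_add) \<Rightarrow> ('k \<Rightarrow> 'f::field) \<Rightarrow> ('k \<Rightarrow> 'f) \<Rightarrow> bool" where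
  "pseudo_angular val res pan \<longleftrightarrow>
     (\<forall>x. x \<noteq> 0 \<longrightarrow> pan x \<noteq> 0) \<and>
     (\<forall>u\<in>units_of_ring (val_ring val). pan u = res u) \<and>
     (\<forall>u\<in>units_of_ring (val_ring val). \<forall>x. x \<noteq> 0 \<longrightarrow> pan (u * x) = res u * pan x) \<and>
     (\<forall>g c. c \<noteq> 0 \<longrightarrow> (\<exists>w. w \<noteq> 0 \<and> val w = g \<and> pan w = c)) \<and>
     (\<forall>x1 x2. x1 \<noteq> 0 \<longrightarrow> x2 \<noteq> 0 \<longrightarrow> x1 + x2 \<noteq> 0 \<longrightarrow>
        (val x1 < val x2 \<longrightarrow> pan (x1 + x2) = pan x1) \<and>
        (val x1 = val x2 \<longrightarrow> pan x1 + pan x2 \<noteq> 0 \<longrightarrow>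
           val (x1 + x2) = val x1 \<and> pan (x1 + x2) = pan x1 + pan x2)) \<and>
     (\<forall>x y. x \<noteq> 0 \<longrightarrow> y \<noteq> 0 \<longrightarrow> same_sq_class (val x) (val y) \<longrightarrow> pan x = pan y \<longrightarrow>
        (\<exists>u. u \<noteq> 0 \<and> y = u ^ 2 * x)) \<and>
     (\<forall>a u. a \<noteq> 0 \<longrightarrow> u \<noteq> 0 \<longrightarrow> (\<exists>k. k \<noteq> 0 \<and> pan (a * u ^ 2) = pan a * k ^ 2))"

definition M_set :: "('k::field \<Rightarrow> 'g::linordered_ab_group_add) \<Rightarrow> ('k \<Rightarrow> 'f::field) \<Rightarrow> 'k set \<Rightarrow> 'g \<Rightarrow> 'f set" where
  "M_set val pan M g = {pan x | x. x \<in> M \<and> x \<noteq> 0 \<and> val x = g} \<union> {0}"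

end

theory Submission
  imports Defs
begin

text \<open>Since 2 is invertible in A, the support of a quasi-quadratic module is an ideal of A,
  by the polarisation identity a x = ((a+1)/2)^2 x + ((a-1)/2)^2 (-x). Hence x lies in the
  support iff M contains every element of valuation val x, which by axiom (5) of the
  pseudo-angular component (two elements of equal value and equal angular component differ by
  a square of a unit) means that M_(val x) is all of F. Multiplying the support ideal by
  elements of nonnegative value propagates this upwards, and M = A iff 1 lies in the support.\<close>

lemma supp_mult_mem:
  fixes A M :: "'k::field set"
  assumes A: "subring A" "inverse 2 \<in> A" and two: "(2::'k) \<noteq> 0"
    and M: "quasi_quadratic_module A M"
    and x: "x \<in> supp M" and a: "a \<in> A"
  shows "a * x \<in> M"
proof -
  have xM: "x \<in> M" "- x \<in> M" using x unfolding supp_def by auto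
  have closed: "\<And>x y. x \<in> A \<Longrightarrow> y \<in> A \<Longrightarrow> x + y \<in> A \<and> x * y \<in> A \<and> - x \<in> A" "1 \<in> A"
    using A(1) unfolding subring_def by blast+
  have "(a + 1) * inverse 2 \<in> A" "(a - 1) * inverse 2 \<in> A"
    using closed A(2) a diff_conv_add_uminus[of a 1] by metis+
  then have "((a + 1) * inverse 2) ^ 2 * x + ((a - 1) * inverse 2) ^ 2 * (- x) \<in> M"
    using M xM unfolding quasi_quadratic_module_def by blast
  moreover have polarisation:
    "((a + 1) * t) ^ 2 * x + ((a - 1) * t) ^ 2 * (- x) = (2 * t) ^ 2 * a * x" for t
    by (simp add: power2_eq_square algebra_simps)
  ultimately show ?thesis unfolding polarisation using two by simp
qed

lemma supp_mult:
  fixes A M :: "'k::field set"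
  assumes "subring A" "inverse 2 \<in> A" "(2::'k) \<noteq> 0" "quasi_quadratic_module A M"
    and x: "x \<in> supp M" and "a \<in> A"
  shows "a * x \<in> supp M"
proof -
  have "- x \<in> supp M" using x unfolding supp_def by force
  then have "a * x \<in> M" "a * - x \<in> M" using supp_mult_mem assms by blast+
  then show ?thesis unfolding supp_def by force
qed

context
  fixes val :: "'k::field \<Rightarrow> 'g::linordered_ab_group_add"
  assumes val: "valuation val"
begin

lemma val_mult: "x \<noteq> 0 \<Longrightarrow> y \<noteq> 0 \<Longrightarrow> val (x * y) = val x + val y"
  using val unfolding valuation_def by blast

lemma val_add: "x \<noteq> 0 \<Longrightarrow> y \<noteq> 0 \<Longrightarrow> x + y \<noteq> 0 \<Longrightarrow> min (val x) (val y) \<le> val (x + y)"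
  using val unfolding valuation_def by blast

lemma val_surj: "\<exists>x. x \<noteq> 0 \<and> val x = g"
  using val unfolding valuation_def by blast

lemma val_one: "val 1 = 0"
  using val_mult[of 1 1] by simp

lemma val_inverse: "x \<noteq> 0 \<Longrightarrow> val (inverse x) = - val x"
  using val_mult[of x "inverse x"] val_one by (simp add: eq_neg_iff_add_eq_0 add.commute)

lemma val_minus: "x \<noteq> 0 \<Longrightarrow> val (- x) = val x"
proof -
  have "val (-1) = 0" using val_mult[of "-1" "-1"] val_one by simp
  then show "x \<noteq> 0 \<Longrightarrow> ?thesis" using val_mult[of "-1" x] by simp
qed

lemma val_eq_zero_if_val_square_mult_eq:
  assumes "u \<noteq> 0" "y \<noteq> 0" "val (u ^ 2 * y) = val y"
  shows "val u = 0"
  using assms val_mult by (simp add: power2_eq_square)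

lemma unit_val_ringI: "u \<noteq> 0 \<Longrightarrow> val u = 0 \<Longrightarrow> u \<in> units_of_ring (val_ring val)"
  unfolding units_of_ring_def val_ring_def using val_inverse[of u] by simp

context
  fixes res :: "'k \<Rightarrow> 'f::field"
  assumes res: "residue_map val res"
begin

lemma res_surj: "\<exists>x\<in>val_ring val. res x = c"
  using res unfolding residue_map_def by blast

lemma res_eq_zero_iff: "x \<in> val_ring val \<Longrightarrow> res x = 0 \<longleftrightarrow> x = 0 \<or> 0 < val x"
  using res unfolding residue_map_def by blast

lemma res_nonzero_imp_val_zero: "u \<in> val_ring val \<Longrightarrow> res u \<noteq> 0 \<Longrightarrow> u \<noteq> 0 \<and> val u = 0"
  using res_eq_zero_iff[of u] unfolding val_ring_def by auto

lemma val_two: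
  assumes "(2::'f) \<noteq> 0"
  shows "(2::'k) \<noteq> 0" "val 2 = 0"
proof -
  have one: "1 \<in> val_ring val" by (simp add: val_ring_def val_one)
  have "res (1 + 1) = res 1 + res 1" "res 1 = 1" using res one unfolding residue_map_def by blast+
  then have res_two: "res 2 = 2" by (metis one_add_one)
  moreover have "res 0 = 0" using res_eq_zero_iff[of 0] by (simp add: val_ring_def)
  ultimately show "(2::'k) \<noteq> 0" using assms by metis
  then have "(2::'k) \<in> val_ring val" using val_add[of 1 1] val_one by (simp add: val_ring_def)
  then show "val 2 = 0" using res_nonzero_imp_val_zero[of 2] res_two assms by simp
qed

end

end

context
  fixes val :: "'k::field \<Rightarrow> 'g::linordered_ab_group_add"
    and res :: "'k \<Rightarrow> 'f::field"
    and pan :: "'k \<Rightarrow> 'f"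
    and A M :: "'k set"
  assumes val: "valuation val"
    and res: "residue_map val res"
    and char: "(2::'f) \<noteq> 0"
    and A: "subring A" "val_ring val \<subseteq> A"
    and pan: "pseudo_angular val res pan"
    and M: "quasi_quadratic_module A M"
begin

lemma inverse_two_mem: "inverse (2::'k) \<in> A"
  using val_two[OF val res char] val_inverse[OF val, of 2] A(2) by (auto simp: val_ring_def)

lemmas supp_mult_closed = supp_mult[OF A(1) inverse_two_mem val_two(1)[OF val res char] M]

lemma pan_nonzero: "x \<noteq> 0 \<Longrightarrow> pan x \<noteq> 0"
  using pan unfolding pseudo_angular_def by blast

lemma pan_unit_mult:
  "u \<in> units_of_ring (val_ring val) \<Longrightarrow> x \<noteq> 0 \<Longrightarrow> pan (u * x) = res u * pan x"
  using pan unfolding pseudo_angular_def by blast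

lemma pan_eq_imp_square_mult:
  "x \<noteq> 0 \<Longrightarrow> y \<noteq> 0 \<Longrightarrow> same_sq_class (val x) (val y) \<Longrightarrow> pan x = pan y \<Longrightarrow>
    \<exists>u. u \<noteq> 0 \<and> y = u ^ 2 * x"
  using pan unfolding pseudo_angular_def by blast

lemma M_set_eq_UNIV_iff:
  "M_set val pan M g = UNIV \<longleftrightarrow> (\<forall>c. c \<noteq> 0 \<longrightarrow> (\<exists>y\<in>M. y \<noteq> 0 \<and> val y = g \<and> pan y = c))"
  unfolding M_set_def by auto

lemma M_set_UNIV_if_supp:
  assumes x: "x \<in> supp M" "x \<noteq> 0"
  shows "M_set val pan M (val x) = UNIV"
  unfolding M_set_eq_UNIV_iff
proof (intro allI impI)
  fix c :: 'f
  assume "c \<noteq> 0"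
  have pan_x: "pan x \<noteq> 0" using pan_nonzero x(2) .
  obtain u where u: "u \<in> val_ring val" "res u = c / pan x" using res_surj[OF val res] by blast
  then have u_unit: "u \<noteq> 0" "val u = 0"
    using res_nonzero_imp_val_zero[OF val res] \<open>c \<noteq> 0\<close> pan_x by auto
  have "u * x \<in> M" using supp_mult_closed x u A(2) unfolding supp_def by blast
  moreover have "val (u * x) = val x" using val_mult[OF val] u_unit x by simp
  moreover have "pan (u * x) = c"
    using pan_unit_mult[OF unit_val_ringI[OF val u_unit] x(2)] u pan_x by simp
  ultimately show "\<exists>y\<in>M. y \<noteq> 0 \<and> val y = val x \<and> pan y = c" using u_unit x by (metis mult_eq_0_iff)
qed

lemma mem_if_M_set_UNIV:
  assumes U: "M_set val pan M (val z) = UNIV" and z: "z \<noteq> 0"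
  shows "z \<in> M"
proof -
  have "pan z \<noteq> 0" using pan_nonzero z .
  then obtain y where y: "y \<in> M" "y \<noteq> 0" "val y = val z" "pan y = pan z"
    using U unfolding M_set_eq_UNIV_iff by blast
  then have "same_sq_class (val y) (val z)" by (simp add: same_sq_class_def)
  then obtain u where u: "u \<noteq> 0" "z = u ^ 2 * y"
    using pan_eq_imp_square_mult y z by blast
  moreover have "val (u ^ 2 * y) = val y" using y(3) u(2) by metis
  ultimately have "val u = 0" using val_eq_zero_if_val_square_mult_eq[OF val] y(2) by blast
  then have "u \<in> A" using A(2) by (force simp: val_ring_def)
  then show ?thesis using M y(1) u(2) unfolding quasi_quadratic_module_def by blast
qed

lemma supp_iff_M_set_UNIV:
  assumes "x \<noteq> 0"
  shows "x \<in> supp M \<longleftrightarrow> M_set val pan M (val x) = UNIV"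
proof
  assume "M_set val pan M (val x) = UNIV"
  then have "x \<in> M" "- x \<in> M"
    using mem_if_M_set_UNIV[of x] mem_if_M_set_UNIV[of "- x"] val_minus[OF val assms] assms
    by simp_all
  then show "x \<in> supp M" unfolding supp_def by force
qed (use M_set_UNIV_if_supp assms in blast)

lemma M_set_UNIV_mono:
  assumes x: "x \<noteq> 0" and U: "M_set val pan M (val x) = UNIV" and h: "val x \<le> h"
  shows "M_set val pan M h = UNIV"
proof -
  obtain w where w: "w \<noteq> 0" "val w = h - val x" using val_surj[OF val] by blast
  then have "w \<in> A" using h A(2) by (auto simp: val_ring_def)
  moreover have "x \<in> supp M" using supp_iff_M_set_UNIV[OF x] U ..
  ultimately have "w * x \<in> supp M" using supp_mult_closed by blast
  moreover have "val (w * x) = h" using val_mult[OF val] w x by simp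
  moreover have "w * x \<noteq> 0" using w x by simp
  ultimately show ?thesis using supp_iff_M_set_UNIV[of "w * x"] by simp
qed

lemma M_set_UNIV_if_M_eq_A:
  assumes "M = A" and g: "g \<in> val ` units_of_ring A \<union> {g. 0 \<le> g}"
  shows "M_set val pan M g = UNIV"
proof -
  obtain a where a: "a \<in> A" "a \<noteq> 0" "val a = g"
  proof (cases "0 \<le> g")
    case True
    obtain w where "w \<noteq> 0" "val w = g" using val_surj[OF val] by blast
    then show ?thesis using that A(2) True by (auto simp: val_ring_def)
  next
    case False
    then show ?thesis using that g unfolding units_of_ring_def by blast
  qed
  then have "a \<in> supp M"
    using assms(1) A(1) unfolding supp_def subring_def by (auto intro: image_eqI[of _ _ "- a"])
  then show ?thesis using supp_iff_M_set_UNIV a by simp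
qed

lemma M_eq_A_if_M_set_zero_UNIV:
  assumes "M_set val pan M 0 = UNIV"
  shows "M = A"
proof -
  have "1 \<in> supp M" using supp_iff_M_set_UNIV[of 1] val_one[OF val] assms by simp
  then have "a \<in> M" if "a \<in> A" for a using supp_mult_closed[of 1 a] that unfolding supp_def by simp
  then show ?thesis using M unfolding quasi_quadratic_module_def by blast
qed

end

theorem mainTheorem7:
  fixes val :: "'k::field \<Rightarrow> 'g::linordered_ab_group_add"
    and res :: "'k \<Rightarrow> 'f::field"
    and pan :: "'k \<Rightarrow> 'f"
    and A M :: "'k set"
    and x :: 'k
  assumes val: "valuation val"
    and res: "residue_map val res"
    and char: "(2::'f) \<noteq> 0"
    and hens: "two_henselian val res"
    and A: "subring A" "val_ring val \<subseteq> A"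
    and pan: "pseudo_angular val res pan"
    and M: "quasi_quadratic_module A M"
    and x: "x \<in> A" "x \<noteq> 0"
  shows "(x \<in> supp M \<longleftrightarrow> M_set val pan M (val x) = UNIV)
    \<and> (M_set val pan M (val x) = UNIV \<longrightarrow> (\<forall>h. val x \<le> h \<longrightarrow> M_set val pan M h = UNIV))
    \<and> ((M = A \<longleftrightarrow> (\<forall>g \<in> val ` units_of_ring A \<union> {g. 0 \<le> g}. M_set val pan M g = UNIV))
       \<and> ((\<forall>g \<in> val ` units_of_ring A \<union> {g. 0 \<le> g}. M_set val pan M g = UNIV) \<longleftrightarrow> M_set val pan M 0 = UNIV))"
proof -
  note setting = val res char A pan M
  have "M = A \<Longrightarrow> \<forall>g \<in> val ` units_of_ring A \<union> {g. 0 \<le> g}. M_set val pan M g = UNIV"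
    using M_set_UNIV_if_M_eq_A[OF setting] by blast
  moreover have "M_set val pan M 0 = UNIV \<Longrightarrow> M = A"
    using M_eq_A_if_M_set_zero_UNIV[OF setting] .
  ultimately show ?thesis
    using supp_iff_M_set_UNIV[OF setting x(2)] M_set_UNIV_mono[OF setting x(2)] by blast
qed

end
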